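(* Let $p$ be a prime, $k \ge 1$ an integer, $q = p^k$, and $n = q^2 + q + 1$. Let $P$ be the set of points of the projective plane over the finite field $\mathbb{F}_q$ (the one-dimensional subspaces of $\mathbb{F}_q^3$; $|P| = n$), and let $L_1, \dots, L_n \subseteq P$ be its lines (for each nonzero $u \in \mathbb{F}_q^3$ up to scalar, the line $\{[v] \in P : u_1v_1 + u_2v_2 + u_3v_3 = 0\}$), each identified with its set of points. Identify the $n$ partitions with the points of $P$. Let $G = (V, E)$ be a finite graph and let $\psi : V \to \{L_1, \dots, L_n\}$ be any map. An FPP partition of $G$ is an assignment of each edge $\{u, v\} \in E$ to a partition (point) in $\psi(u) \cap \psi(v)$ (this intersection is a single point if $\psi(u) \neq \psi(v)$, and is the whole line $\psi(u)$ if $\psi(u) = \psi(v)$). For each point $x \in P$ let $E_x$ be the set of edges assigned to $x$, and let $RF = \frac{\sum_{x \in P} |V(E_x)|}{|V|}$, where $V(E_x)$ is the set of vertices incident to at least one edge of $E_x$. Then $RF \le q + 1$, and $\sqrt{n} \le q + 1 \le \sqrt{n} + 1$; in particular $RF \le \sqrt{n} + 1$.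
   Context: Every line of the projective plane over $\mathbb{F}_q$ contains exactly $q+1$ points, and any two distinct lines meet in exactly one point. *)

theory Defs
  imports Complex_Main "HOL-Computational_Algebra.Primes" "HOL-Library.Cardinality"
begin

text \<open>Vectors of F_q^3 are triples. A point of the projective plane PG(2,q) is a
one-dimensional subspace of F_q^3, represented as the set of its vectors.\<close>

definition proj_points :: "('a::field \<times> 'a \<times> 'a) set set" where
  "proj_points = {{(c * a, c * b, c * d) | c. True} | a b d. (a, b, d) \<noteq> (0, 0, 0)}"

definition dot3 :: "'a::field \<times> 'a \<times> 'a \<Rightarrow> 'a \<times> 'a \<times> 'a \<Rightarrow> 'a" where
  "dot3 u v = fst u * fst v + fst (snd u) * fst (snd v) + snd (snd u) * snd (snd v)"

definition proj_line :: "'a::field \<times> 'a \<times> 'a \<Rightarrow> ('a \<times> 'a \<times> 'a) set set" where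
  "proj_line u = {x \<in> proj_points. \<forall>v \<in> x. dot3 u v = 0}"

definition proj_lines :: "('a::field \<times> 'a \<times> 'a) set set set" where
  "proj_lines = {proj_line u | u. u \<noteq> (0, 0, 0)}"

definition finite_graph :: "'v set \<Rightarrow> 'v set set \<Rightarrow> bool" where
  "finite_graph V E \<longleftrightarrow> finite V \<and> (\<forall>e \<in> E. e \<subseteq> V \<and> card e = 2)"

definition FPP_partition ::
  "'v set set \<Rightarrow> ('v \<Rightarrow> ('a::field \<times> 'a \<times> 'a) set set) \<Rightarrow> ('v set \<Rightarrow> ('a \<times> 'a \<times> 'a) set) \<Rightarrow> bool" where
  "FPP_partition E \<psi> f \<longleftrightarrow> (\<forall>u v. {u, v} \<in> E \<longrightarrow> f {u, v} \<in> \<psi> u \<inter> \<psi> v)"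

definition RF ::
  "'v set \<Rightarrow> 'v set set \<Rightarrow> ('v set \<Rightarrow> ('a::field \<times> 'a \<times> 'a) set) \<Rightarrow> real" where
  "RF V E f = (\<Sum>x \<in> proj_points. real (card (\<Union> {e \<in> E. f e = x}))) / real (card V)"

end

theory Submission
  imports Defs
begin

text \<open>Every vertex v only meets edges whose colours (points) lie on the line \<psi> v, so a
  double count of the pairs (vertex, colour class containing it) bounds the numerator of RF
  by |V| times the number of points on a line. A line has at most q + 1 points: after a cyclic
  permutation of the coordinates its normal vector has a nonzero third coordinate, and then
  its points are parametrised by the affine points (1, y, _) and one point at infinity.\<close>

definition smult3 :: "'a::field \<Rightarrow> 'a \<times> 'a \<times> 'a \<Rightarrow> 'a \<times> 'a \<times> 'a" where
  "smult3 t v = (t * fst v, t * fst (snd v), t * snd (snd v))"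

definition proj_point :: "'a::field \<times> 'a \<times> 'a \<Rightarrow> ('a \<times> 'a \<times> 'a) set" where
  "proj_point v = range (\<lambda>t. smult3 t v)"

lemma smult3_smult3 [simp]: "smult3 s (smult3 t v) = smult3 (s * t) v"
  by (simp add: smult3_def mult.assoc)

lemma smult3_one [simp]: "smult3 1 v = v"
  by (simp add: smult3_def)

lemma proj_point_smult3:
  assumes "t \<noteq> 0"
  shows "proj_point (smult3 t v) = proj_point v"
proof
  show "proj_point (smult3 t v) \<subseteq> proj_point v"
    unfolding proj_point_def by auto
  have "smult3 s v = smult3 (s / t) (smult3 t v)" for s
    using assms by simp
  then show "proj_point v \<subseteq> proj_point (smult3 t v)"
    unfolding proj_point_def by blast
qed

lemma proj_points_eq: "proj_points = {proj_point v | v. v \<noteq> (0, 0, 0)}"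
  unfolding proj_points_def proj_point_def smult3_def by fastforce

lemma dot3_smult3_right [simp]: "dot3 u (smult3 t v) = t * dot3 u v"
  by (simp add: dot3_def smult3_def algebra_simps)

lemma proj_line_eq: "proj_line u = {proj_point v | v. v \<noteq> (0, 0, 0) \<and> dot3 u v = 0}"
proof -
  have "(\<forall>w \<in> proj_point v. dot3 u w = 0) \<longleftrightarrow> dot3 u v = 0" for v
    unfolding proj_point_def using dot3_smult3_right[of u 1 v] by auto
  then show ?thesis
    unfolding proj_line_def proj_points_eq by blast
qed

lemma proj_line_subset_chart_range:
  fixes a b c :: "'a::field"
  assumes "c \<noteq> 0"
  shows "proj_line (a, b, c) \<subseteq>
    range (\<lambda>y. case y of None \<Rightarrow> proj_point (0, 1, - b / c)
                       | Some y \<Rightarrow> proj_point (1, y, - (a + b * y) / c))"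
    (is "_ \<subseteq> range ?chart")
proof
  fix x assume "x \<in> proj_line (a, b, c)"
  then obtain v1 v2 v3 where x: "x = proj_point (v1, v2, v3)"
    and nz: "(v1, v2, v3) \<noteq> (0, 0, 0)" and eq: "a * v1 + b * v2 + c * v3 = 0"
    unfolding proj_line_eq dot3_def by auto
  have "c * v3 = - (a * v1 + b * v2)"
    using eq by (simp add: eq_neg_iff_add_eq_0 algebra_simps)
  then have v3: "v3 = - (a * v1 + b * v2) / c"
    using assms by (simp add: field_simps)
  show "x \<in> range ?chart"
  proof (cases "v1 = 0")
    case False
    have "(v1, v2, v3) = smult3 v1 (1, v2 / v1, - (a + b * (v2 / v1)) / c)"
      using False assms by (simp add: smult3_def v3 field_simps)
    then have "x = proj_point (1, v2 / v1, - (a + b * (v2 / v1)) / c)"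
      using x False by (simp add: proj_point_smult3)
    then show ?thesis
      by (intro range_eqI[where x = "Some (v2 / v1)"]) simp
  next
    case True
    then have "v2 \<noteq> 0"
      using nz v3 by auto
    have "(v1, v2, v3) = smult3 v2 (0, 1, - b / c)"
      using True by (simp add: smult3_def v3)
    then have "x = proj_point (0, 1, - b / c)"
      using x \<open>v2 \<noteq> 0\<close> by (simp add: proj_point_smult3)
    then show ?thesis
      by (intro range_eqI[where x = None]) simp
  qed
qed

lemma card_proj_line_le_if_third_nonzero:
  fixes a b c :: "'a::{finite, field}"
  assumes "c \<noteq> 0"
  shows "card (proj_line (a, b, c)) \<le> CARD('a) + 1"
proof -
  obtain chart :: "'a option \<Rightarrow> ('a \<times> 'a \<times> 'a) set" where "proj_line (a, b, c) \<subseteq> range chart"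
    using proj_line_subset_chart_range[OF assms] by blast
  then have "card (proj_line (a, b, c)) \<le> card (range chart)"
    by (intro card_mono) simp_all
  also have "\<dots> \<le> CARD('a option)"
    by (rule card_image_le) simp
  finally show ?thesis
    by (simp add: card_UNIV_option)
qed

definition rot3 :: "'a \<times> 'a \<times> 'a \<Rightarrow> 'a \<times> 'a \<times> 'a" where
  "rot3 v = (fst (snd v), snd (snd v), fst v)"

lemma rot3_rot3_rot3 [simp]: "rot3 (rot3 (rot3 v)) = v"
  by (simp add: rot3_def)

lemma inj_rot3: "inj rot3"
  by (metis injI rot3_rot3_rot3)

lemma dot3_rot3 [simp]: "dot3 (rot3 u) (rot3 v) = dot3 u v"
  by (simp add: dot3_def rot3_def algebra_simps)

lemma rot3_eq_zero_iff [simp]: "rot3 v = (0, 0, 0) \<longleftrightarrow> v = (0, 0, 0)"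
  by (cases v) (auto simp: rot3_def)

lemma image_rot3_proj_point: "rot3 ` proj_point v = proj_point (rot3 v)"
  unfolding proj_point_def by (auto simp: rot3_def smult3_def image_iff)

lemma proj_line_rot3: "proj_line (rot3 u) = (\<lambda>x. rot3 ` x) ` proj_line u"
proof (intro equalityI subsetI)
  fix x assume "x \<in> proj_line (rot3 u)"
  then obtain w where x: "x = proj_point w" and "w \<noteq> (0, 0, 0)" and "dot3 (rot3 u) w = 0"
    unfolding proj_line_eq by blast
  define v where "v = rot3 (rot3 w)"
  have w: "w = rot3 v"
    by (simp add: v_def)
  have "v \<noteq> (0, 0, 0)" and "dot3 u v = 0"
    using \<open>w \<noteq> (0, 0, 0)\<close> \<open>dot3 (rot3 u) w = 0\<close> by (simp_all add: w)
  then have "proj_point v \<in> proj_line u"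
    unfolding proj_line_eq by blast
  moreover have "x = rot3 ` proj_point v"
    by (simp add: x w image_rot3_proj_point)
  ultimately show "x \<in> (\<lambda>x. rot3 ` x) ` proj_line u"
    by blast
next
  fix x assume "x \<in> (\<lambda>x. rot3 ` x) ` proj_line u"
  then obtain v where x: "x = proj_point (rot3 v)" and "v \<noteq> (0, 0, 0)" and "dot3 u v = 0"
    unfolding proj_line_eq by (auto simp: image_rot3_proj_point)
  then have "rot3 v \<noteq> (0, 0, 0)" and "dot3 (rot3 u) (rot3 v) = 0"
    by simp_all
  then show "x \<in> proj_line (rot3 u)"
    unfolding proj_line_eq x by blast
qed

lemma card_proj_line_rot3: "card (proj_line (rot3 u)) = card (proj_line u)"
  unfolding proj_line_rot3
  by (rule card_image) (simp add: inj_on_def inj_image_eq_iff[OF inj_rot3])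

lemma card_proj_line_le:
  fixes u :: "'a::{finite, field} \<times> 'a \<times> 'a"
  assumes "u \<noteq> (0, 0, 0)"
  shows "card (proj_line u) \<le> CARD('a) + 1"
proof -
  obtain a b c where u: "u = (a, b, c)"
    by (cases u) auto
  consider "c \<noteq> 0" | "a \<noteq> 0" | "b \<noteq> 0"
    using assms u by auto
  then show ?thesis
  proof cases
    case 1
    then show ?thesis
      using u card_proj_line_le_if_third_nonzero by blast
  next
    case 2
    have "card (proj_line u) = card (proj_line (b, c, a))"
      using card_proj_line_rot3[of u] by (simp add: u rot3_def)
    then show ?thesis
      using 2 card_proj_line_le_if_third_nonzero by metis
  next
    case 3
    have "card (proj_line u) = card (proj_line (c, a, b))"
      using card_proj_line_rot3[of u] card_proj_line_rot3[of "rot3 u"] by (simp add: u rot3_def)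
    then show ?thesis
      using 3 card_proj_line_le_if_third_nonzero by metis
  qed
qed

lemma FPP_partition_endpoint:
  assumes "finite_graph V E" and "FPP_partition E \<psi> f" and "e \<in> E" and "v \<in> e"
  shows "f e \<in> \<psi> v"
proof -
  obtain w where "e = {v, w}"
    using assms(1,3,4) unfolding finite_graph_def by (metis card_2_iff insert_commute insertE singletonD)
  then show ?thesis
    using assms(2,3) unfolding FPP_partition_def by blast
qed

lemma sum_card_colour_class_vertices_le:
  fixes f :: "'v set \<Rightarrow> 'c" and \<psi> :: "'v \<Rightarrow> 'c set"
  assumes G: "finite_graph V E" and "finite C"
    and colour: "\<And>e v. e \<in> E \<Longrightarrow> v \<in> e \<Longrightarrow> f e \<in> \<psi> v"
    and palette: "\<And>v. v \<in> V \<Longrightarrow> finite (\<psi> v) \<and> card (\<psi> v) \<le> m"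
  shows "(\<Sum>x \<in> C. card (\<Union> {e \<in> E. f e = x})) \<le> card V * m"
proof -
  define incident where "incident x v \<longleftrightarrow> v \<in> \<Union> {e \<in> E. f e = x}" for x v
  have "finite V" and colour_class: "\<Union> {e \<in> E. f e = x} = {v \<in> V. incident x v}" for x
    using G unfolding finite_graph_def incident_def by auto
  have "(\<Sum>x \<in> C. card (\<Union> {e \<in> E. f e = x})) = (\<Sum>x \<in> C. card {v \<in> V. incident x v})"
    by (simp only: colour_class)
  also have "\<dots> = (\<Sum>v \<in> V. card {x \<in> C. incident x v})"
    by (rule sum_multicount_gen) (use \<open>finite V\<close> \<open>finite C\<close> in simp_all)
  also have "\<dots> \<le> (\<Sum>v \<in> V. m)"
  proof (rule sum_mono)
    fix v assume "v \<in> V"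
    have "{x \<in> C. incident x v} \<subseteq> \<psi> v"
      using colour unfolding incident_def by blast
    then have "card {x \<in> C. incident x v} \<le> card (\<psi> v)"
      using palette[OF \<open>v \<in> V\<close>] by (intro card_mono) simp_all
    then show "card {x \<in> C. incident x v} \<le> m"
      using palette[OF \<open>v \<in> V\<close>] by linarith
  qed
  finally show ?thesis
    by simp
qed

lemma RF_le:
  fixes \<psi> :: "'v \<Rightarrow> ('a::{finite, field} \<times> 'a \<times> 'a) set set"
    and f :: "'v set \<Rightarrow> ('a \<times> 'a \<times> 'a) set"
  assumes "finite_graph V E" and "\<forall>v \<in> V. \<psi> v \<in> proj_lines" and "FPP_partition E \<psi> f"
  shows "RF V E f \<le> real CARD('a) + 1"
proof -
  have "(\<Sum>x \<in> proj_points. card (\<Union> {e \<in> E. f e = x})) \<le> card V * (CARD('a) + 1)"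
  proof (rule sum_card_colour_class_vertices_le[OF assms(1)])
    show "f e \<in> \<psi> v" if "e \<in> E" "v \<in> e" for e v
      using FPP_partition_endpoint[OF assms(1,3) that] .
    show "finite (\<psi> v) \<and> card (\<psi> v) \<le> CARD('a) + 1" if "v \<in> V" for v
    proof -
      have "\<psi> v \<in> proj_lines"
        using assms(2) that by blast
      then obtain u :: "'a \<times> 'a \<times> 'a" where "u \<noteq> (0, 0, 0)" and "\<psi> v = proj_line u"
        unfolding proj_lines_def by blast
      then show ?thesis
        using card_proj_line_le by (simp only: finite_class.finite simp_thms)
    qed
  qed (rule finite_class.finite)
  then have "real (\<Sum>x \<in> proj_points. card (\<Union> {e \<in> E. f e = x})) \<le> real (card V * (CARD('a) + 1))"
    by (rule of_nat_mono)
  then have "real (\<Sum>x \<in> proj_points. card (\<Union> {e \<in> E. f e = x})) \<le> (real CARD('a) + 1) * real (card V)"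
    by (simp add: algebra_simps)
  then show ?thesis
    unfolding RF_def by (cases "card V = 0") (simp_all add: pos_divide_le_eq)
qed

lemma sqrt_square_add_add_one_le:
  fixes q :: real
  assumes "0 \<le> q"
  shows "sqrt (q\<^sup>2 + q + 1) \<le> q + 1"
  using assms by (intro real_le_lsqrt) (auto simp: power2_eq_square algebra_simps)

lemma le_sqrt_square_add_add_one:
  fixes q :: real
  assumes "0 \<le> q"
  shows "q \<le> sqrt (q\<^sup>2 + q + 1)"
  using assms by (intro real_le_rsqrt) auto

theorem theorem4:
  fixes p k :: nat
    and V :: "'v set" and E :: "'v set set"
    and \<psi> :: "'v \<Rightarrow> ('a::{finite, field} \<times> 'a \<times> 'a) set set"
    and f :: "'v set \<Rightarrow> ('a \<times> 'a \<times> 'a) set"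
  assumes "prime p" and "k \<ge> 1" and "CARD('a) = p ^ k"
    and "finite_graph V E"
    and "\<forall>v \<in> V. \<psi> v \<in> proj_lines"
    and "FPP_partition E \<psi> f"
  shows "RF V E f \<le> real CARD('a) + 1
       \<and> sqrt (real (CARD('a)^2 + CARD('a) + 1)) \<le> real CARD('a) + 1
       \<and> real CARD('a) + 1 \<le> sqrt (real (CARD('a)^2 + CARD('a) + 1)) + 1
       \<and> RF V E f \<le> sqrt (real (CARD('a)^2 + CARD('a) + 1)) + 1"
proof -
  have n: "real (CARD('a)^2 + CARD('a) + 1) = (real CARD('a))\<^sup>2 + real CARD('a) + 1"
    by simp
  show ?thesis
    using RF_le[OF assms(4-6)] unfolding n
    using sqrt_square_add_add_one_le[of "real CARD('a)"] le_sqrt_square_add_add_one[of "real CARD('a)"]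
    by simp
qed

end
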